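(* Consider the multi-sender unicast index-coding instance with $N=4$ messages, $K=2$ senders with $\mathcal S_1=\{1,2,3\}$, $\mathcal S_2=\{2,3,4\}$, link capacities $C_1=C_2=1$, and receiver side information $\mathcal A_1=\{4\}$, $\mathcal A_2=\{1,3\}$, $\mathcal A_3=\{1,2\}$, $\mathcal A_4=\{2,3\}$. Its capacity region is $$\mathcal C=\{(R_1,R_2,R_3,R_4)\in\mathbb R_+^4: R_1\le1,\ R_4\le1,\ R_1+R_2\le2,\ R_1+R_3\le2,\ R_2+R_4\le2,\ R_3+R_4\le2\}.$$
   Context: Model. $N$ independent messages $M_1,\dots,M_N$, $M_j$ uniform on $[1:2^{nR_j}]$ ($n$ the block length). Sender $k$ knows the messages $M_i$, $i\in\mathcal S_k$, and sends an index $L_k=f_k((M_i)_{i\in\mathcal S_k})\in[1:2^{nC_k})=\{1,\dots,2^{\lfloor nC_k\rfloor}\}$ over a noiseless broadcast link reaching all receivers. Receiver $j$ knows $M_i$, $i\in\mathcal A_j$, and must output an estimate $\hat M_j=g_j(L_1,\dots,L_K,(M_i)_{i\in\mathcal A_j})$ of $M_j$. A rate tuple is achievable if there exist such codes with $\Pr[(\hat M_1,\dots,\hat M_N)\ne(M_1,\dots,M_N)]\to0$ as $n\to\infty$; the capacity region $\mathcal C$ is the closure of the set of achievable rate tuples. *)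

theory Defs
  imports "HOL-Analysis.Analysis"
begin

text \<open>Messages are indexed by 1..N, senders by 1..K.  A message tuple is a function
  m :: nat \<Rightarrow> nat (only the values on 1..N matter; we use extensional tuples).\<close>

text \<open>Message set of message j at block length n: [1:2^(n R_j)], read as {1..ceil(2^(n R_j))}.\<close>
definition msg_size :: "nat \<Rightarrow> real \<Rightarrow> nat" where
  "msg_size n r = nat \<lceil>2 powr (real n * r)\<rceil>"

definition msg_space :: "nat \<Rightarrow> (nat \<Rightarrow> real) \<Rightarrow> nat \<Rightarrow> (nat \<Rightarrow> nat) set" where
  "msg_space N R n = PiE {1..N} (\<lambda>j. {1..msg_size n (R j)})"

text \<open>Index set of sender k: [1:2^(n C_k)) = {1,...,2^floor(n C_k)}.\<close>
definition link_size :: "nat \<Rightarrow> real \<Rightarrow> nat" where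
  "link_size n c = 2 ^ nat \<lfloor>real n * c\<rfloor>"

definition sent :: "nat \<Rightarrow> (nat \<Rightarrow> (nat \<Rightarrow> nat) \<Rightarrow> nat) \<Rightarrow> (nat \<Rightarrow> nat) \<Rightarrow> nat \<Rightarrow> nat" where
  "sent K f m = (\<lambda>k. if k \<in> {1..K} then f k m else 0)"

definition valid_code ::
  "nat \<Rightarrow> nat \<Rightarrow> (nat \<Rightarrow> nat set) \<Rightarrow> (nat \<Rightarrow> nat set) \<Rightarrow> (nat \<Rightarrow> real) \<Rightarrow> (nat \<Rightarrow> real) \<Rightarrow> nat
   \<Rightarrow> (nat \<Rightarrow> (nat \<Rightarrow> nat) \<Rightarrow> nat) \<Rightarrow> (nat \<Rightarrow> (nat \<Rightarrow> nat) \<Rightarrow> (nat \<Rightarrow> nat) \<Rightarrow> nat) \<Rightarrow> bool" where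
  "valid_code N K S A C R n f g \<longleftrightarrow>
     (\<forall>k\<in>{1..K}. \<forall>m\<in>msg_space N R n. f k m \<in> {1..link_size n (C k)}) \<and>
     (\<forall>k\<in>{1..K}. \<forall>m\<in>msg_space N R n. \<forall>m'\<in>msg_space N R n.
         (\<forall>i\<in>S k. m i = m' i) \<longrightarrow> f k m = f k m') \<and>
     (\<forall>j\<in>{1..N}. \<forall>L. \<forall>m\<in>msg_space N R n. \<forall>m'\<in>msg_space N R n.
         (\<forall>i\<in>A j. m i = m' i) \<longrightarrow> g j L m = g j L m')"

definition err_prob ::
  "nat \<Rightarrow> nat \<Rightarrow> (nat \<Rightarrow> real) \<Rightarrow> nat
   \<Rightarrow> (nat \<Rightarrow> (nat \<Rightarrow> nat) \<Rightarrow> nat) \<Rightarrow> (nat \<Rightarrow> (nat \<Rightarrow> nat) \<Rightarrow> (nat \<Rightarrow> nat) \<Rightarrow> nat) \<Rightarrow> real" where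
  "err_prob N K R n f g =
     real (card {m \<in> msg_space N R n. \<exists>j\<in>{1..N}. g j (sent K f m) m \<noteq> m j})
     / real (card (msg_space N R n))"

definition achievable ::
  "nat \<Rightarrow> nat \<Rightarrow> (nat \<Rightarrow> nat set) \<Rightarrow> (nat \<Rightarrow> nat set) \<Rightarrow> (nat \<Rightarrow> real) \<Rightarrow> (nat \<Rightarrow> real) \<Rightarrow> bool" where
  "achievable N K S A C R \<longleftrightarrow>
     (\<forall>j\<in>{1..N}. 0 \<le> R j) \<and>
     (\<exists>P :: nat \<Rightarrow> real. P \<longlonglongrightarrow> 0 \<and>
        (\<forall>n. \<exists>f g. valid_code N K S A C R n f g \<and> err_prob N K R n f g \<le> P n))"

definition S_ex :: "nat \<Rightarrow> nat set" where
  "S_ex k = (if k = 1 then {1,2,3} else if k = 2 then {2,3,4} else {})"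

definition A_ex :: "nat \<Rightarrow> nat set" where
  "A_ex j = (if j = 1 then {4} else if j = 2 then {1,3} else if j = 3 then {1,2}
             else if j = 4 then {2,3} else {})"

definition C_ex :: "nat \<Rightarrow> real" where
  "C_ex k = 1"

definition rate4 :: "real \<Rightarrow> real \<Rightarrow> real \<Rightarrow> real \<Rightarrow> nat \<Rightarrow> real" where
  "rate4 r1 r2 r3 r4 = (\<lambda>j. if j = 1 then r1 else if j = 2 then r2 else if j = 3 then r3
                            else if j = 4 then r4 else 0)"

definition capacity_region_ex :: "(real \<times> real \<times> real \<times> real) set" where
  "capacity_region_ex = closure {(r1, r2, r3, r4). achievable 4 2 S_ex A_ex C_ex (rate4 r1 r2 r3 r4)}"

end

theory Submission
  imports Defs
begin

text \<open>
  A genie revealing the messages in a set D and the indices sent on the links in J,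
  where every other sender only knows messages in D, lets the receivers of the remaining
  messages decode them one after another, each using side information already recovered.
  The correctly decoded message tuples therefore inject into the genie's output, so the error
  probability is at least 1 - 2^{n (\<Sigma>_J C_k - \<Sigma>_{j\<notin>D} R_j)}, and the rates outside D
  cannot exceed the capacity of J. Six choices of (D, J) give the six inequalities.

  Both senders know M_2 and M_3, and it suffices to convey their sum modulo
  max(|M_2|, |M_3|): receivers 2 and 3 know the other summand, receiver 4 knows both.
  The sum is written in three digits. The lowest digit is added to M_1 on link 1 and to M_4
  on link 2 (receiver 1 reads it off link 2 with the help of M_4, receiver 4 computes it),
  the middle and top digits fill the room left on links 1 and 2. This fits for all large n as
  soon as the rates lie in a shrunken copy t \<cdot> C with t < 1, and taking the closure gives C.
\<close>

lemma msg_size_pos: "0 < msg_size n r"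
  unfolding msg_size_def by simp

lemma of_nat_msg_size: "real (msg_size n r) = of_int \<lceil>2 powr (real n * r)\<rceil>"
proof -
  have "0 < 2 powr (real n * r)"
    by simp
  then have "0 \<le> \<lceil>2 powr (real n * r)\<rceil>"
    by linarith
  then show ?thesis
    unfolding msg_size_def by simp
qed

lemma msg_size_ge_powr: "2 powr (real n * r) \<le> real (msg_size n r)"
  unfolding of_nat_msg_size by linarith

lemma msg_size_le_powr:
  assumes "0 \<le> r"
  shows "real (msg_size n r) \<le> 2 powr (1 + real n * r)"
proof -
  have "1 \<le> 2 powr (real n * r)"
    using assms by (simp add: ge_one_powr_ge_zero)
  moreover have "real (msg_size n r) \<le> 2 powr (real n * r) + 1"
    unfolding of_nat_msg_size by linarith
  ultimately show ?thesis
    by (simp add: powr_add)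
qed

lemma link_size_le_powr:
  assumes "0 \<le> c"
  shows "real (link_size n c) \<le> 2 powr (real n * c)"
proof -
  have "real (link_size n c) = 2 powr real_of_int \<lfloor>real n * c\<rfloor>"
    using assms by (simp add: link_size_def powr_realpow[symmetric])
  also have "\<dots> \<le> 2 powr (real n * c)"
    by (intro powr_mono) auto
  finally show ?thesis .
qed

lemma link_size_one: "link_size n 1 = 2 ^ n"
  unfolding link_size_def by simp

lemma finite_msg_space: "finite (msg_space N R n)"
  unfolding msg_space_def by (simp add: finite_PiE)

lemma card_msg_space: "card (msg_space N R n) = (\<Prod>j\<in>{1..N}. msg_size n (R j))"
  unfolding msg_space_def by (simp add: card_PiE)

definition correctly_decoded ::
  "nat \<Rightarrow> nat \<Rightarrow> (nat \<Rightarrow> real) \<Rightarrow> nat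
   \<Rightarrow> (nat \<Rightarrow> (nat \<Rightarrow> nat) \<Rightarrow> nat) \<Rightarrow> (nat \<Rightarrow> (nat \<Rightarrow> nat) \<Rightarrow> (nat \<Rightarrow> nat) \<Rightarrow> nat)
   \<Rightarrow> (nat \<Rightarrow> nat) set" where
  "correctly_decoded N K R n f g =
     {m \<in> msg_space N R n. \<forall>j\<in>{1..N}. g j (sent K f m) m = m j}"

lemma err_prob_eq_correctly_decoded:
  "err_prob N K R n f g =
     1 - real (card (correctly_decoded N K R n f g)) / real (card (msg_space N R n))"
proof -
  let ?M = "msg_space N R n" and ?G = "correctly_decoded N K R n f g"
  let ?B = "{m \<in> ?M. \<exists>j\<in>{1..N}. g j (sent K f m) m \<noteq> m j}"
  have "finite ?G" "finite ?B" "?G \<inter> ?B = {}"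
    using finite_msg_space[of N R n] unfolding correctly_decoded_def by auto
  then have "card (?G \<union> ?B) = card ?G + card ?B"
    by (rule card_Un_disjoint)
  moreover have "?G \<union> ?B = ?M"
    unfolding correctly_decoded_def by blast
  ultimately have "real (card ?B) = real (card ?M) - real (card ?G)"
    by simp
  moreover have "0 < card ?M"
    by (simp add: card_msg_space msg_size_pos)
  ultimately show ?thesis
    unfolding err_prob_def by (simp add: diff_divide_distrib)
qed

lemma err_prob_ge_of_inj_on:
  assumes "finite T"
    and "inj_on \<phi> (correctly_decoded N K R n f g)"
    and "\<phi> ` correctly_decoded N K R n f g \<subseteq> T"
  shows "1 - real (card T) / real (card (msg_space N R n)) \<le> err_prob N K R n f g"
proof -
  have "card (correctly_decoded N K R n f g) \<le> card T"
    using card_inj_on_le assms by blast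
  then show ?thesis
    unfolding err_prob_eq_correctly_decoded by (simp add: divide_right_mono)
qed

lemma valid_code_const: "valid_code N K S A C R n (\<lambda>k m. 1) (\<lambda>j L m. 1)"
  unfolding valid_code_def link_size_def by simp

lemma err_prob_le_one: "err_prob N K R n f g \<le> 1"
  unfolding err_prob_eq_correctly_decoded by simp

fun decodable_chain :: "(nat \<Rightarrow> nat set) \<Rightarrow> nat set \<Rightarrow> nat list \<Rightarrow> bool" where
  "decodable_chain A D [] = True"
| "decodable_chain A D (j # js) \<longleftrightarrow> A j \<subseteq> D \<and> decodable_chain A (insert j D) js"

lemma decodable_chain_agree:
  assumes code: "valid_code N K S A C R n f g"
    and m: "m \<in> correctly_decoded N K R n f g" and m': "m' \<in> correctly_decoded N K R n f g"
    and sent: "sent K f m = sent K f m'"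
    and "decodable_chain A D js" "set js \<subseteq> {1..N}" "\<forall>i\<in>D. m i = m' i"
  shows "\<forall>i\<in>D \<union> set js. m i = m' i"
  using assms(5-7)
proof (induction js arbitrary: D)
  case Nil
  then show ?case by simp
next
  case (Cons j js)
  have j: "j \<in> {1..N}" and side_info: "\<forall>i\<in>A j. m i = m' i"
    using Cons.prems by auto
  have "g j (sent K f m') m = g j (sent K f m') m'"
    using code side_info j m m' unfolding valid_code_def correctly_decoded_def by blast
  then have "m j = m' j"
    using j m m' sent unfolding correctly_decoded_def by auto
  then show ?case
    using Cons.IH[of "insert j D"] Cons.prems by auto
qed

lemma err_prob_ge_genie:
  assumes code: "valid_code N K S A C R n f g"
    and chain: "decodable_chain A D js" and cover: "D \<union> set js = {1..N}"
    and J: "J \<subseteq> {1..K}" and computable: "\<forall>k\<in>{1..K} - J. S k \<subseteq> D"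
  shows "1 - (\<Prod>k\<in>J. real (link_size n (C k))) / (\<Prod>j\<in>{1..N} - D. real (msg_size n (R j)))
           \<le> err_prob N K R n f g"
proof -
  let ?s = "\<lambda>j. msg_size n (R j)" and ?G = "correctly_decoded N K R n f g"
  define T where "T = (\<Pi>\<^sub>E j\<in>D. {1..?s j}) \<times> (\<Pi>\<^sub>E k\<in>J. {1..link_size n (C k)})"
  define \<phi> where "\<phi> m = (restrict m D, restrict (\<lambda>k. f k m) J)" for m :: "nat \<Rightarrow> nat"
  have D: "D \<subseteq> {1..N}"
    using cover by auto
  have inj: "inj_on \<phi> ?G"
  proof (rule inj_onI)
    fix m m' assume m: "m \<in> ?G" and m': "m' \<in> ?G" and "\<phi> m = \<phi> m'"
    then have restr: "restrict m D = restrict m' D" "restrict (\<lambda>k. f k m) J = restrict (\<lambda>k. f k m') J"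
      unfolding \<phi>_def by simp_all
    have agree: "m i = m' i" if "i \<in> D" for i
      using fun_cong[OF restr(1), of i] that by simp
    have links: "f k m = f k m'" if "k \<in> J" for k
      using fun_cong[OF restr(2), of k] that by simp
    have msgs: "m \<in> msg_space N R n" "m' \<in> msg_space N R n"
      using m m' unfolding correctly_decoded_def by auto
    have "f k m = f k m'" if "k \<in> {1..K}" for k
    proof (cases "k \<in> J")
      case False
      then have "S k \<subseteq> D"
        using computable that by blast
      then show ?thesis
        using code msgs agree that unfolding valid_code_def by blast
    qed (use links in blast)
    then have "sent K f m = sent K f m'"
      unfolding sent_def by auto
    then have "\<forall>i\<in>{1..N}. m i = m' i"
      using decodable_chain_agree[OF code m m' _ chain] agree cover by auto
    then show "m = m'"
      using msgs unfolding msg_space_def by (auto intro: PiE_ext)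
  qed
  have img: "\<phi> ` ?G \<subseteq> T"
  proof
    fix x assume "x \<in> \<phi> ` ?G"
    then obtain m where m: "m \<in> msg_space N R n" and x: "x = \<phi> m"
      unfolding correctly_decoded_def by blast
    have "f k m \<in> {1..link_size n (C k)}" if "k \<in> J" for k
      using code m J that unfolding valid_code_def by blast
    moreover have "m j \<in> {1..?s j}" if "j \<in> D" for j
      using m D that unfolding msg_space_def by blast
    ultimately show "x \<in> T"
      unfolding x \<phi>_def T_def by auto
  qed
  have "finite D" "finite J"
    using D J finite_subset by auto
  then have card_T: "real (card T) = (\<Prod>j\<in>D. real (?s j)) * (\<Prod>k\<in>J. real (link_size n (C k)))"
    unfolding T_def by (simp add: card_cartesian_product card_PiE)
  have card_M: "real (card (msg_space N R n)) = (\<Prod>j\<in>D. real (?s j)) * (\<Prod>j\<in>{1..N} - D. real (?s j))"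
    using prod.subset_diff[OF D, of "\<lambda>j. real (?s j)"] by (simp add: card_msg_space mult.commute)
  have "0 < (\<Prod>j\<in>D. real (?s j))"
    by (simp add: prod_pos msg_size_pos)
  then have "real (card T) / real (card (msg_space N R n))
      = (\<Prod>k\<in>J. real (link_size n (C k))) / (\<Prod>j\<in>{1..N} - D. real (?s j))"
    unfolding card_T card_M by simp
  moreover have "finite T"
    using \<open>finite D\<close> \<open>finite J\<close> unfolding T_def by (simp add: finite_PiE)
  ultimately show ?thesis
    using err_prob_ge_of_inj_on[OF _ inj img] by simp
qed

lemma nonneg_if_error_bound_vanishes:
  fixes a :: real
  assumes P: "P \<longlonglongrightarrow> 0" and bound: "\<And>n. 1 - 2 powr (real n * a) \<le> P n"
  shows "0 \<le> a"
proof (rule ccontr)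
  assume "\<not> 0 \<le> a"
  have pow: "2 powr (real n * a) = (2 powr a) ^ n" for n
    by (simp add: powr_powr[symmetric] powr_realpow mult.commute)
  have "(\<lambda>n. (2 powr a) ^ n) \<longlonglongrightarrow> 0"
    using \<open>\<not> 0 \<le> a\<close> powr_less_one[of 2 a] by (intro LIMSEQ_power_zero) simp
  then have "(\<lambda>n. 1 - 2 powr (real n * a)) \<longlonglongrightarrow> 1 - 0"
    unfolding pow by (intro tendsto_diff tendsto_const)
  then have "1 - 0 \<le> (0::real)"
    using P bound by (intro LIMSEQ_le) auto
  then show False
    by simp
qed

lemma genie_rate_bound:
  assumes "achievable N K S A C R"
    and chain: "decodable_chain A D js" and cover: "D \<union> set js = {1..N}"
    and J: "J \<subseteq> {1..K}" and computable: "\<forall>k\<in>{1..K} - J. S k \<subseteq> D"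
    and C: "\<forall>k\<in>J. 0 \<le> C k"
  shows "(\<Sum>j\<in>{1..N} - D. R j) \<le> (\<Sum>k\<in>J. C k)"
proof -
  obtain P :: "nat \<Rightarrow> real" where P: "P \<longlonglongrightarrow> 0"
    and codes: "\<forall>n. \<exists>f g. valid_code N K S A C R n f g \<and> err_prob N K R n f g \<le> P n"
    using assms(1) unfolding achievable_def by blast
  let ?cap = "\<Sum>k\<in>J. C k" and ?rate = "\<Sum>j\<in>{1..N} - D. R j"
  have "1 - 2 powr (real n * (?cap - ?rate)) \<le> P n" for n
  proof -
    obtain f g where code: "valid_code N K S A C R n f g" and err: "err_prob N K R n f g \<le> P n"
      using codes by blast
    have "(\<Prod>k\<in>J. real (link_size n (C k))) \<le> (\<Prod>k\<in>J. 2 powr (real n * C k))"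
      using C by (intro prod_mono) (simp add: link_size_le_powr)
    also have "\<dots> = 2 powr (real n * ?cap)"
      by (simp add: powr_sum sum_distrib_left)
    finally have links: "(\<Prod>k\<in>J. real (link_size n (C k))) \<le> 2 powr (real n * ?cap)" .
    have "2 powr (real n * ?rate) = (\<Prod>j\<in>{1..N} - D. 2 powr (real n * R j))"
      by (simp add: powr_sum sum_distrib_left)
    also have "\<dots> \<le> (\<Prod>j\<in>{1..N} - D. real (msg_size n (R j)))"
      by (intro prod_mono) (simp add: msg_size_ge_powr)
    finally have msgs: "2 powr (real n * ?rate) \<le> (\<Prod>j\<in>{1..N} - D. real (msg_size n (R j)))" .
    have "(\<Prod>k\<in>J. real (link_size n (C k))) / (\<Prod>j\<in>{1..N} - D. real (msg_size n (R j)))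
        \<le> 2 powr (real n * ?cap) / 2 powr (real n * ?rate)"
      using links msgs by (intro frac_le) auto
    also have "\<dots> = 2 powr (real n * (?cap - ?rate))"
      by (simp add: right_diff_distrib powr_diff)
    finally show ?thesis
      using err_prob_ge_genie[OF code chain cover J computable] err by linarith
  qed
  then show ?thesis
    using nonneg_if_error_bound_vanishes[OF P] by fastforce
qed

lemma atLeastAtMost_1_4: "{1..4::nat} = {1, 2, 3, 4}"
  by auto

lemma atLeastAtMost_1_2: "{1..2::nat} = {1, 2}"
  by auto

lemma achievable_ex_bounds:
  assumes ach: "achievable 4 2 S_ex A_ex C_ex R"
  shows "R 1 \<le> 1" "R 4 \<le> 1" "R 1 + R 2 \<le> 2" "R 1 + R 3 \<le> 2" "R 2 + R 4 \<le> 2" "R 3 + R 4 \<le> 2"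
proof -
  have bound: "(\<Sum>j\<in>{1, 2, 3, 4} - D. R j) \<le> real (card J)"
    if "decodable_chain A_ex D js" "D \<union> set js = {1, 2, 3, 4}" "J \<subseteq> {1, 2}"
      "\<forall>k\<in>{1, 2} - J. S_ex k \<subseteq> D"
    for D js J
    using genie_rate_bound[OF ach, of D js J] that
    unfolding atLeastAtMost_1_4 atLeastAtMost_1_2 by (simp add: C_ex_def)
  show "R 1 \<le> 1"
    using bound[of "{2, 3, 4}" "[1]" "{1}"] by (simp add: A_ex_def S_ex_def insert_Diff_if insert_commute)
  show "R 4 \<le> 1"
    using bound[of "{1, 2, 3}" "[4]" "{2}"] by (simp add: A_ex_def S_ex_def insert_Diff_if insert_commute)
  show "R 1 + R 2 \<le> 2"
    using bound[of "{3, 4}" "[1, 2]" "{1, 2}"] by (simp add: A_ex_def S_ex_def insert_Diff_if insert_commute)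
  show "R 1 + R 3 \<le> 2"
    using bound[of "{2, 4}" "[1, 3]" "{1, 2}"] by (simp add: A_ex_def S_ex_def insert_Diff_if insert_commute)
  show "R 2 + R 4 \<le> 2"
    using bound[of "{1, 3}" "[2, 4]" "{1, 2}"] by (simp add: A_ex_def S_ex_def insert_Diff_if insert_commute)
  show "R 3 + R 4 \<le> 2"
    using bound[of "{1, 2}" "[3, 4]" "{1, 2}"] by (simp add: A_ex_def S_ex_def insert_Diff_if insert_commute)
qed

lemma mixed_radix_expansion:
  fixes a X Y :: int
  assumes "0 \<le> Y"
  shows "a = a mod X + X * (a div X mod Y + Y * (a div (X * Y)))"
proof -
  have "a div (X * Y) = a div X div Y"
    using assms by (rule zdiv_zmult2_eq)
  then show ?thesis
    by (simp add: algebra_simps)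
qed

lemma two_digit_code:
  fixes u v r :: int
  assumes "0 \<le> u" "u < r" "0 \<le> v"
  shows "(int (nat (1 + u + r * v)) - 1) mod r = u" "(int (nat (1 + u + r * v)) - 1) div r = v"
proof -
  have "int (nat (1 + u + r * v)) - 1 = u + r * v"
    using assms by simp
  then show "(int (nat (1 + u + r * v)) - 1) mod r = u" "(int (nat (1 + u + r * v)) - 1) div r = v"
    using assms by simp_all
qed

lemma two_digit_code_range:
  fixes u v r q :: int and W :: nat
  assumes "0 \<le> u" "u < r" "0 \<le> v" "v < q" "r * q \<le> int W"
  shows "1 \<le> nat (1 + u + r * v)" "nat (1 + u + r * v) \<le> W"
proof -
  have "r * v \<le> r * (q - 1)" "0 \<le> r * v"
    using assms by (auto intro: mult_left_mono)
  then have "0 \<le> u + r * v" "u + r * v < int W"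
    using assms by (auto simp: algebra_simps)
  then show "1 \<le> nat (1 + u + r * v)" "nat (1 + u + r * v) \<le> W"
    by (simp_all add: nat_le_iff le_nat_iff)
qed

lemma sub_mod_cancel:
  fixes a x r :: int
  assumes "0 \<le> a" "a < r"
  shows "((a + x) mod r - x) mod r = a" "((x + a) mod r - x) mod r = a"
  using assms by (simp_all add: mod_diff_left_eq)

definition offset :: "(nat \<Rightarrow> nat) \<Rightarrow> nat \<Rightarrow> int" where
  "offset m j = int (m j) - 1"

text \<open>
  With x, y, z the digits of (M_2 + M_3) mod max(s_2, s_3) in the mixed radix
  (min(s_1, s_4), W div s_1, W div s_4), link 1 carries the pair ((M_1 + x) mod s_1, y) and
  link 2 the pair ((M_4 + x) mod s_4, z), each packed into {1..W}; messages and digits are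
  counted from 0 in the arithmetic (offset).
\<close>

locale sum_scheme =
  fixes s :: "nat \<Rightarrow> nat" and W :: nat
  assumes sizes_pos: "\<And>j. 0 < s j"
    and fits: "max (s 2) (s 3) \<le> min (s 1) (s 4) * (W div s 1) * (W div s 4)"
begin

abbreviation mix_radix :: int where "mix_radix \<equiv> int (max (s 2) (s 3))"
abbreviation low_radix :: int where "low_radix \<equiv> int (min (s 1) (s 4))"
abbreviation mid_radix :: int where "mid_radix \<equiv> int (W div s 1)"
abbreviation top_radix :: int where "top_radix \<equiv> int (W div s 4)"

definition mix :: "(nat \<Rightarrow> nat) \<Rightarrow> int" where
  "mix m = (offset m 2 + offset m 3) mod mix_radix"

definition enc :: "nat \<Rightarrow> (nat \<Rightarrow> nat) \<Rightarrow> nat" where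
  "enc k m =
     (if k = 1
      then nat (1 + (offset m 1 + mix m mod low_radix) mod int (s 1)
                  + int (s 1) * (mix m div low_radix mod mid_radix))
      else nat (1 + (offset m 4 + mix m mod low_radix) mod int (s 4)
                  + int (s 4) * (mix m div (low_radix * mid_radix))))"

definition recovered_mix :: "(nat \<Rightarrow> nat) \<Rightarrow> (nat \<Rightarrow> nat) \<Rightarrow> int" where
  "recovered_mix L m =
     ((int (L 1) - 1) mod int (s 1) - offset m 1) mod int (s 1)
     + low_radix * ((int (L 1) - 1) div int (s 1) + mid_radix * ((int (L 2) - 1) div int (s 4)))"

definition dec :: "nat \<Rightarrow> (nat \<Rightarrow> nat) \<Rightarrow> (nat \<Rightarrow> nat) \<Rightarrow> nat" where
  "dec j L m = nat (1 +
     (if j = 1 then ((int (L 1) - 1) mod int (s 1)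
                     - ((int (L 2) - 1) mod int (s 4) - offset m 4) mod int (s 4)) mod int (s 1)
      else if j = 2 then (recovered_mix L m - offset m 3) mod mix_radix
      else if j = 3 then (recovered_mix L m - offset m 2) mod mix_radix
      else ((int (L 2) - 1) mod int (s 4) - mix m mod low_radix) mod int (s 4)))"

lemma radices_pos: "0 < low_radix" "0 < mix_radix" "0 < mid_radix" "0 < top_radix"
proof -
  have "0 < min (s 1) (s 4) * (W div s 1) * (W div s 4)"
    using fits sizes_pos[of 2] by linarith
  then show "0 < low_radix" "0 < mix_radix" "0 < mid_radix" "0 < top_radix"
    using sizes_pos[of 2] by simp_all
qed

lemma mix_range: "0 \<le> mix m" "mix m < mix_radix"
  unfolding mix_def using radices_pos by simp_all

lemma top_digit_less: "mix m div (low_radix * mid_radix) < top_radix"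
proof (rule ccontr)
  let ?z = "mix m div (low_radix * mid_radix)"
  assume "\<not> ?z < top_radix"
  then have "low_radix * mid_radix * top_radix \<le> low_radix * mid_radix * ?z"
    using radices_pos by (intro mult_left_mono) auto
  also have "\<dots> = mix m - mix m mod (low_radix * mid_radix)"
    by (simp add: minus_mod_eq_mult_div)
  also have "\<dots> \<le> mix m"
    using radices_pos by simp
  also have "\<dots> < mix_radix"
    by (rule mix_range(2))
  also have "\<dots> \<le> low_radix * mid_radix * top_radix"
    using fits by (metis of_nat_le_iff of_nat_mult)
  finally show False
    by simp
qed

lemma link1_digits:
  "(int (enc 1 m) - 1) mod int (s 1) = (offset m 1 + mix m mod low_radix) mod int (s 1)"
  "(int (enc 1 m) - 1) div int (s 1) = mix m div low_radix mod mid_radix"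
  unfolding enc_def using sizes_pos[of 1] radices_pos by (simp_all add: two_digit_code)

lemma link2_digits:
  "(int (enc 2 m) - 1) mod int (s 4) = (offset m 4 + mix m mod low_radix) mod int (s 4)"
  "(int (enc 2 m) - 1) div int (s 4) = mix m div (low_radix * mid_radix)"
  unfolding enc_def using sizes_pos[of 4] radices_pos mix_range(1)[of m]
  by (simp_all add: two_digit_code pos_imp_zdiv_nonneg_iff)

lemma enc_range: "k \<in> {1, 2} \<Longrightarrow> enc k m \<in> {1..W}"
proof -
  let ?x = "mix m mod low_radix"
  have "int (s 1) * mid_radix \<le> int W" "int (s 4) * top_radix \<le> int W"
    by (simp_all flip: of_nat_mult)
  then show "k \<in> {1, 2} \<Longrightarrow> enc k m \<in> {1..W}"
    using two_digit_code_range[where u = "(offset m 1 + ?x) mod int (s 1)" and r = "int (s 1)"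
        and v = "mix m div low_radix mod mid_radix" and q = mid_radix]
      two_digit_code_range[where u = "(offset m 4 + ?x) mod int (s 4)" and r = "int (s 4)"
        and v = "mix m div (low_radix * mid_radix)" and q = top_radix]
      sizes_pos[of 1] sizes_pos[of 4] radices_pos mix_range(1)[of m] top_digit_less[of m]
    unfolding enc_def by (auto simp: pos_imp_zdiv_nonneg_iff)
qed

lemma dec_correct:
  assumes m: "m \<in> (\<Pi>\<^sub>E j\<in>{1..4}. {1..s j})" and j: "j \<in> {1..4}"
  shows "dec j (sent 2 enc m) m = m j"
proof -
  let ?L = "sent 2 enc m" and ?x = "mix m mod low_radix"
  have L: "?L 1 = enc 1 m" "?L 2 = enc 2 m"
    by (simp_all add: sent_def)
  have offset_range: "0 \<le> offset m i" "offset m i < int (s i)" if "i \<in> {1..4}" for i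
  proof -
    have "m i \<in> {1..s i}"
      using m that by blast
    then show "0 \<le> offset m i" "offset m i < int (s i)"
      unfolding offset_def by auto
  qed
  have "0 \<le> ?x" "?x < low_radix"
    using radices_pos by simp_all
  then have x_range: "0 \<le> ?x" "?x < int (s 1)" "?x < int (s 4)"
    by linarith+
  have x_from_link1: "((int (?L 1) - 1) mod int (s 1) - offset m 1) mod int (s 1) = ?x"
    unfolding L link1_digits using x_range by (simp add: sub_mod_cancel)
  have x_from_link2: "((int (?L 2) - 1) mod int (s 4) - offset m 4) mod int (s 4) = ?x"
    unfolding L link2_digits using x_range by (simp add: sub_mod_cancel)
  have recovered: "recovered_mix ?L m = mix m"
    unfolding recovered_mix_def x_from_link1 unfolding L link1_digits link2_digits
    by (rule mixed_radix_expansion[symmetric]) (use radices_pos in simp)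
  have offset_inv: "nat (1 + offset m i) = m i" if "i \<in> {1..4}" for i
    using offset_range(1)[OF that] unfolding offset_def by simp
  have "offset m 2 < mix_radix" "offset m 3 < mix_radix"
    using offset_range[of 2] offset_range[of 3] by auto
  then have mix_minus: "(mix m - offset m 3) mod mix_radix = offset m 2"
      "(mix m - offset m 2) mod mix_radix = offset m 3"
    unfolding mix_def using offset_range[of 2] offset_range[of 3] by (simp_all add: sub_mod_cancel)
  from j consider "j = 1" | "j = 2" | "j = 3" | "j = 4"
    by force
  then show ?thesis
  proof cases
    case 1
    then show ?thesis
      using offset_inv[of 1] offset_range[of 1] x_range
      unfolding dec_def x_from_link2 unfolding L link1_digits by (simp add: sub_mod_cancel)
  next
    case 2
    then show ?thesis
      using offset_inv[of 2] unfolding dec_def recovered mix_minus by simp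
  next
    case 3
    then show ?thesis
      using offset_inv[of 3] unfolding dec_def recovered mix_minus by simp
  next
    case 4
    then show ?thesis
      using offset_inv[of 4] offset_range[of 4] x_range
      unfolding dec_def L link2_digits by (simp add: sub_mod_cancel)
  qed
qed

lemma valid_code_ex:
  assumes s: "\<And>j. s j = msg_size n (R j)" and W: "W = 2 ^ n"
  shows "valid_code 4 2 S_ex A_ex C_ex R n enc dec" "err_prob 4 2 R n enc dec = 0"
proof -
  have M: "msg_space 4 R n = (\<Pi>\<^sub>E j\<in>{1..4}. {1..s j})"
    unfolding msg_space_def s ..
  have range: "\<forall>k\<in>{1..2}. \<forall>m\<in>msg_space 4 R n. enc k m \<in> {1..link_size n (C_ex k)}"
    using enc_range unfolding atLeastAtMost_1_2 by (simp add: C_ex_def link_size_one W)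
  have encoders: "\<forall>k\<in>{1..2}. \<forall>m\<in>msg_space 4 R n. \<forall>m'\<in>msg_space 4 R n.
      (\<forall>i\<in>S_ex k. m i = m' i) \<longrightarrow> enc k m = enc k m'"
    by (auto simp: S_ex_def enc_def mix_def offset_def)
  have decoders: "\<forall>j\<in>{1..4}. \<forall>L. \<forall>m\<in>msg_space 4 R n. \<forall>m'\<in>msg_space 4 R n.
      (\<forall>i\<in>A_ex j. m i = m' i) \<longrightarrow> dec j L m = dec j L m'"
    by (auto simp: A_ex_def dec_def recovered_mix_def mix_def offset_def)
  show "valid_code 4 2 S_ex A_ex C_ex R n enc dec"
    unfolding valid_code_def using range encoders decoders by blast
  have "correctly_decoded 4 2 R n enc dec = msg_space 4 R n"
    unfolding correctly_decoded_def M using dec_correct by blast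
  moreover have "0 < card (msg_space 4 R n)"
    by (simp add: card_msg_space msg_size_pos)
  ultimately show "err_prob 4 2 R n enc dec = 0"
    unfolding err_prob_eq_correctly_decoded by simp
qed

end

lemma le_mult_div_mult_div:
  fixes a b \<sigma> W :: nat
  assumes "0 < a" "0 < b" "2 * a \<le> W" "2 * b \<le> W" "4 * \<sigma> * b \<le> W\<^sup>2"
  shows "\<sigma> \<le> a * (W div a) * (W div b)"
proof -
  have half: "W \<le> 2 * (c * (W div c))" if "0 < c" "2 * c \<le> W" for c
  proof -
    have "W = c * (W div c) + W mod c" "W mod c < c"
      using that by simp_all
    then show ?thesis
      using that by linarith
  qed
  have "4 * \<sigma> * b \<le> (2 * (a * (W div a))) * (2 * (b * (W div b)))"
    using assms half[of a] half[of b] by (metis mult_le_mono order.trans power2_eq_square)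
  also have "\<dots> = 4 * b * (a * (W div a) * (W div b))"
    by (simp add: ac_simps)
  finally show ?thesis
    using assms by (simp add: mult.assoc)
qed

lemma two_powr_le_two_power:
  fixes x :: real
  assumes "x \<le> real n"
  shows "2 powr x \<le> 2 ^ n"
  using assms by (simp add: powr_realpow[symmetric])

lemma sum_scheme_msg_sizes:
  fixes R :: "nat \<Rightarrow> real" and t :: real
  assumes nonneg: "\<forall>j\<in>{1..4}. 0 \<le> R j"
    and "R 1 \<le> t" "R 4 \<le> t"
    and "R 1 + R 2 \<le> 2 * t" "R 1 + R 3 \<le> 2 * t" "R 2 + R 4 \<le> 2 * t" "R 3 + R 4 \<le> 2 * t"
    and large: "2 \<le> real n * (1 - t)"
  shows "sum_scheme (\<lambda>j. msg_size n (R j)) (2 ^ n)"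
proof -
  let ?s = "\<lambda>j. msg_size n (R j)" and ?W = "2 ^ n :: nat"
  have size: "real (?s j) \<le> 2 powr (1 + real n * R j)" if "j \<in> {1..4}" for j
    using msg_size_le_powr nonneg that by blast
  have single: "2 * ?s i \<le> ?W" if "i \<in> {1..4}" "R i \<le> t" for i
  proof -
    have "real n * R i \<le> real n * t"
      using that by (intro mult_left_mono) auto
    then have "2 + real n * R i \<le> real n"
      using large by (simp add: algebra_simps)
    then have "2 powr (2 + real n * R i) \<le> 2 ^ n"
      by (rule two_powr_le_two_power)
    moreover have "2 * real (?s i) \<le> 2 powr (2 + real n * R i)"
      using size[OF that(1)] by (simp add: powr_add)
    ultimately show ?thesis
      by (metis (mono_tags) order.trans of_nat_le_iff of_nat_mult of_nat_numeral of_nat_power)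
  qed
  have pair: "4 * ?s k * ?s i \<le> ?W\<^sup>2" if "k \<in> {1..4}" "i \<in> {1..4}" "R k + R i \<le> 2 * t" for k i
  proof -
    have "real n * (R k + R i) \<le> real n * (2 * t)"
      using that by (intro mult_left_mono) auto
    then have "4 + real n * R k + real n * R i \<le> real (2 * n)"
      using large by (simp add: algebra_simps)
    then have "2 powr (4 + real n * R k + real n * R i) \<le> 2 ^ (2 * n)"
      by (rule two_powr_le_two_power)
    moreover have "4 * real (?s k) * real (?s i) \<le> 4 * 2 powr (1 + real n * R k) * 2 powr (1 + real n * R i)"
      using size that by (intro mult_mono) auto
    moreover have "4 * 2 powr (1 + real n * R k) * 2 powr (1 + real n * R i) = 2 powr (4 + real n * R k + real n * R i)"
      by (simp add: powr_add)
    ultimately have "real (4 * ?s k * ?s i) \<le> real (?W\<^sup>2)"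
      by (simp add: power_mult[symmetric] mult.commute)
    then show ?thesis
      by linarith
  qed
  have "4 * max (?s 2) (?s 3) * max (?s 1) (?s 4) \<le> ?W\<^sup>2"
    using pair[of 2 1] pair[of 2 4] pair[of 3 1] pair[of 3 4] assms by (simp add: max_def add.commute)
  then have fits: "max (?s 2) (?s 3) \<le> min (?s 1) (?s 4) * (?W div ?s 1) * (?W div ?s 4)"
    using single[of 1] single[of 4] assms msg_size_pos[of n]
      le_mult_div_mult_div[of "?s 1" "?s 4" ?W] le_mult_div_mult_div[of "?s 4" "?s 1" ?W]
    by (cases "?s 1 \<le> ?s 4") (simp_all add: max_def min_def ac_simps)
  show ?thesis
    by unfold_locales (rule msg_size_pos, rule fits)
qed

lemma achievable_ex_if_scaled_region:
  fixes R :: "nat \<Rightarrow> real" and t :: real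
  assumes nonneg: "\<forall>j\<in>{1..4}. 0 \<le> R j" and "t < 1"
    and bounds: "R 1 \<le> t" "R 4 \<le> t"
      "R 1 + R 2 \<le> 2 * t" "R 1 + R 3 \<le> 2 * t" "R 2 + R 4 \<le> 2 * t" "R 3 + R 4 \<le> 2 * t"
  shows "achievable 4 2 S_ex A_ex C_ex R"
proof -
  define n\<^sub>0 where "n\<^sub>0 = nat \<lceil>2 / (1 - t)\<rceil>"
  define P :: "nat \<Rightarrow> real" where "P n = (if n\<^sub>0 \<le> n then 0 else 1)" for n
  have "P \<longlonglongrightarrow> 0"
    by (rule tendsto_eventually) (auto simp: P_def eventually_sequentially)
  moreover have "\<exists>f g. valid_code 4 2 S_ex A_ex C_ex R n f g \<and> err_prob 4 2 R n f g \<le> P n" for n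
  proof (cases "n\<^sub>0 \<le> n")
    case True
    then have "2 / (1 - t) \<le> real n"
      unfolding n\<^sub>0_def by linarith
    then have "2 \<le> real n * (1 - t)"
      using \<open>t < 1\<close> by (simp add: divide_le_eq)
    then interpret sum_scheme "\<lambda>j. msg_size n (R j)" "2 ^ n"
      using sum_scheme_msg_sizes[OF nonneg bounds] by blast
    show ?thesis
      using valid_code_ex[of n R] True unfolding P_def by (intro exI[of _ enc] exI[of _ dec]) simp
  next
    case False
    then show ?thesis
      using valid_code_const err_prob_le_one unfolding P_def
      by (intro exI[of _ "\<lambda>k m. 1"] exI[of _ "\<lambda>j L m. 1"]) simp
  qed
  ultimately show ?thesis
    unfolding achievable_def using nonneg by blast
qed

definition region_ex :: "(real \<times> real \<times> real \<times> real) set" where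
  "region_ex = {(r1, r2, r3, r4). 0 \<le> r1 \<and> 0 \<le> r2 \<and> 0 \<le> r3 \<and> 0 \<le> r4 \<and>
       r1 \<le> 1 \<and> r4 \<le> 1 \<and> r1 + r2 \<le> 2 \<and> r1 + r3 \<le> 2 \<and> r2 + r4 \<le> 2 \<and> r3 + r4 \<le> 2}"

lemma achievable_ex_subset_region_ex:
  "{(r1, r2, r3, r4). achievable 4 2 S_ex A_ex C_ex (rate4 r1 r2 r3 r4)} \<subseteq> region_ex"
proof clarify
  fix r1 r2 r3 r4 assume ach: "achievable 4 2 S_ex A_ex C_ex (rate4 r1 r2 r3 r4)"
  then have "\<forall>j\<in>{1..4}. 0 \<le> rate4 r1 r2 r3 r4 j"
    unfolding achievable_def by blast
  then show "(r1, r2, r3, r4) \<in> region_ex"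
    using achievable_ex_bounds[OF ach] unfolding region_ex_def atLeastAtMost_1_4 by (simp add: rate4_def)
qed

lemma closed_region_ex: "closed region_ex"
proof -
  have region: "region_ex = {p. 0 \<le> fst p \<and> 0 \<le> fst (snd p) \<and> 0 \<le> fst (snd (snd p)) \<and> 0 \<le> snd (snd (snd p)) \<and>
       fst p \<le> 1 \<and> snd (snd (snd p)) \<le> 1 \<and> fst p + fst (snd p) \<le> 2 \<and> fst p + fst (snd (snd p)) \<le> 2 \<and>
       fst (snd p) + snd (snd (snd p)) \<le> 2 \<and> fst (snd (snd p)) + snd (snd (snd p)) \<le> 2}"
    unfolding region_ex_def by auto
  show ?thesis
    unfolding region by (intro closed_Collect_conj closed_Collect_le continuous_intros)
qed

lemma scaled_region_ex_achievable:
  assumes "p \<in> region_ex" "0 \<le> t" "t < 1"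
  shows "t *\<^sub>R p \<in> {(r1, r2, r3, r4). achievable 4 2 S_ex A_ex C_ex (rate4 r1 r2 r3 r4)}"
proof -
  obtain r1 r2 r3 r4 where p: "p = (r1, r2, r3, r4)"
    by (cases p) auto
  have scaled_le: "t * r \<le> t * c" if "r \<le> c" for r c
    using that assms(2) by (rule mult_left_mono)
  have "achievable 4 2 S_ex A_ex C_ex (rate4 (t * r1) (t * r2) (t * r3) (t * r4))"
    using assms scaled_le[of r1 1] scaled_le[of r4 1] scaled_le[of "r1 + r2" 2] scaled_le[of "r1 + r3" 2]
      scaled_le[of "r2 + r4" 2] scaled_le[of "r3 + r4" 2] scaled_le[of 0]
    unfolding p region_ex_def
    by (intro achievable_ex_if_scaled_region[where t = t])
       (auto simp: atLeastAtMost_1_4 rate4_def distrib_left)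
  then show ?thesis
    unfolding p by simp
qed

lemma region_ex_subset_closure:
  "region_ex \<subseteq> closure {(r1, r2, r3, r4). achievable 4 2 S_ex A_ex C_ex (rate4 r1 r2 r3 r4)}"
proof
  fix p assume p: "p \<in> region_ex"
  define t :: "nat \<Rightarrow> real" where "t k = 1 - inverse (real (Suc k))" for k
  have t: "0 \<le> t k" "t k < 1" for k
    unfolding t_def by (simp_all add: inverse_le_1_iff)
  have "t \<longlonglongrightarrow> 1 - 0"
    unfolding t_def by (intro tendsto_diff tendsto_const LIMSEQ_inverse_real_of_nat)
  then have "(\<lambda>k. t k *\<^sub>R p) \<longlonglongrightarrow> p"
    using tendsto_scaleR[OF _ tendsto_const[of p]] by fastforce
  then show "p \<in> closure {(r1, r2, r3, r4). achievable 4 2 S_ex A_ex C_ex (rate4 r1 r2 r3 r4)}"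
    unfolding closure_sequential using scaled_region_ex_achievable[OF p t]
    by (intro exI[of _ "\<lambda>k. t k *\<^sub>R p"]) blast
qed

theorem mainTheorem3:
  shows "capacity_region_ex =
    {(r1, r2, r3, r4). 0 \<le> r1 \<and> 0 \<le> r2 \<and> 0 \<le> r3 \<and> 0 \<le> r4 \<and>
       r1 \<le> 1 \<and> r4 \<le> 1 \<and> r1 + r2 \<le> 2 \<and> r1 + r3 \<le> 2 \<and> r2 + r4 \<le> 2 \<and> r3 + r4 \<le> 2}"
proof -
  have "closure {(r1, r2, r3, r4). achievable 4 2 S_ex A_ex C_ex (rate4 r1 r2 r3 r4)} \<subseteq> region_ex"
    using achievable_ex_subset_region_ex closed_region_ex by (rule closure_minimal)
  then show ?thesis
    unfolding capacity_region_ex_def region_ex_def[symmetric] using region_ex_subset_closure by blast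
qed

end
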